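(* (a) For each integer $N\ge0$, the set $\{(a,b)\in P: N(a,b)\le N\}$ is relatively closed in $P$. (b) For every sequence $(a_\nu,b_\nu)$ in $P$ converging to a point of $P'\setminus\{(0,-1)\}$, one has $N(a_\nu,b_\nu)\to\infty$.
   Context: Let $P$ be the set of $(a,b)\in\mathbb{R}^2$ such that $h(x)=x^2+ax+b$ has no multiple root and $h(x)>0$ for all real $x$ with $|x|\ge1$ (equivalently: $a^2<4b$, or $a^2>4b$ and $|a|<\min\{2,b+1\}$). Let $P'=\{(a,b)\in\mathbb{R}^2: a^2=4b\ge4\}\cup\{(a,b)\in\mathbb{R}^2:|a|=b+1\le2\}$. For $(a,b)\in P$ let $C_{a,b}$ be the affine curve $y^2+(x^2-1)(x^2+ax+b)=0$, $\mathbb{R}[C_{a,b}]=\mathbb{R}[x,y]/(y^2+(x^2-1)(x^2+ax+b))$. For $g=u(x)+v(x)y$ put $\delta(g)=\max\{\deg u,\deg v+2\}$, and for $0\ne g$ let $\theta(g)$ be the least integer $e\ge0$ with $g=\sum_i g_i^2$, $g_i\in\mathbb{R}[C_{a,b}]$, $\delta(g_i)\le e$. Define $N(a,b):=\theta(1-x^2)$ computed in $\mathbb{R}[C_{a,b}]$. *)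

theory Defs
  imports "HOL-Analysis.Analysis" "HOL-Computational_Algebra.Polynomial" "HOL-Library.Extended_Nat"
begin

definition hpoly :: "real \<Rightarrow> real \<Rightarrow> real poly" where
  "hpoly a b = [:b, a, 1:]"

definition Pset :: "(real \<times> real) set" where
  "Pset = {(a, b). (\<forall>z::complex. \<not> (poly (map_poly of_real (hpoly a b)) z = 0 \<and>
                                   poly (pderiv (map_poly of_real (hpoly a b))) z = 0))
                 \<and> (\<forall>x::real. \<bar>x\<bar> \<ge> 1 \<longrightarrow> poly (hpoly a b) x > 0)}"

definition P'set :: "(real \<times> real) set" where
  "P'set = {(a, b). a\<^sup>2 = 4 * b \<and> 4 * b \<ge> 4} \<union> {(a, b). \<bar>a\<bar> = b + 1 \<and> b + 1 \<le> 2}"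

text \<open>Elements of R[C_{a,b}] = R[x,y]/(y^2 + f), f = (x^2-1) h, in their unique normal form
  u(x) + v(x) y, represented as the pair (u, v).\<close>
definition fpoly :: "real \<Rightarrow> real \<Rightarrow> real poly" where
  "fpoly a b = [:-1, 0, 1:] * hpoly a b"

definition cmult :: "real \<Rightarrow> real \<Rightarrow> real poly \<times> real poly \<Rightarrow> real poly \<times> real poly \<Rightarrow> real poly \<times> real poly" where
  "cmult a b g1 g2 = (fst g1 * fst g2 - snd g1 * snd g2 * fpoly a b,
                      fst g1 * snd g2 + fst g2 * snd g1)"

text \<open>delta(u + v y) = max(deg u, deg v + 2), with deg 0 = -infinity (so a zero part is ignored).\<close>
definition delta :: "real poly \<times> real poly \<Rightarrow> nat" where
  "delta g = (if snd g = 0 then degree (fst g) else max (degree (fst g)) (degree (snd g) + 2))"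

definition sos_bounded :: "real \<Rightarrow> real \<Rightarrow> real poly \<times> real poly \<Rightarrow> nat \<Rightarrow> bool" where
  "sos_bounded a b g e \<longleftrightarrow> (\<exists>gs :: (real poly \<times> real poly) list.
      (\<forall>gi \<in> set gs. delta gi \<le> e) \<and>
      fst g = (\<Sum>gi\<leftarrow>gs. fst (cmult a b gi gi)) \<and>
      snd g = (\<Sum>gi\<leftarrow>gs. snd (cmult a b gi gi)))"

text \<open>theta(g): least e with such a representation (infinity if none exists).\<close>
definition theta :: "real \<Rightarrow> real \<Rightarrow> real poly \<times> real poly \<Rightarrow> enat" where
  "theta a b g = Inf {enat e | e. sos_bounded a b g e}"

definition Nfun :: "real \<times> real \<Rightarrow> enat" where
  "Nfun p = theta (fst p) (snd p) ([:1, 0, -1:], 0)"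

end

theory Submission
  imports Defs
begin

(*
  Write h = x^2 + a x + b and f = (x^2 - 1) h.  A representation 1 - x^2 = sum_g g^2 in
  R[C_{a,b}] with delta(g) <= n is, after evaluation, a list of pairs (u_g, v_g) with
  deg u_g <= n, v_g = 0 or deg v_g <= n - 2, and
      sum u_g^2 - f sum v_g^2 = 1 - x^2,      sum u_g v_g = 0.                      (R)
  Rearranged, (1 - x^2)(1 - h V) = sum u_g^2 with V = sum v_g^2: hence V <= 1/h at points
  of (-1,1) where h > 0, and h V >= 1 at points outside [-1,1].

  V has degree <= 2n, so Lagrange interpolation at 2n+1 nodes in (-1,1) bounds
  V(t), for |t| > 1, by sum_j |L_j(t)| / h(x_j).  Every point of P' other than (0,-1) gives
  an h with a real root x0, |x0| >= 1, and an interval in (-1,1) on which h > 0.  For t close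
  to x0 and parameters close to the limit this bound forces h(t) V(t) < 1, contradicting (R).

  Expanding u_g, v_g in Lagrange bases at fixed nodes turns (R) into linear
  conditions on a positive semidefinite Gram matrix.  Its entries are controlled by the values
  of u_g^2, v_g^2 at the nodes, hence bounded uniformly for nearby parameters; a convergent
  subsequence of Gram matrices gives a Gram matrix for the limit parameters, and factoring it
  as a sum of rank-one matrices turns it back into a sum-of-squares representation.
*)

abbreviation one_minus_sq :: "real poly \<times> real poly" where
  "one_minus_sq \<equiv> ([:1, 0, -1:], 0)"

lemma poly_hpoly: "poly (hpoly a b) x = x\<^sup>2 + a * x + b"
  by (simp add: hpoly_def power2_eq_square algebra_simps)

lemma poly_fpoly: "poly (fpoly a b) x = (x\<^sup>2 - 1) * poly (hpoly a b) x"
  by (simp add: fpoly_def poly_hpoly power2_eq_square algebra_simps)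

lemma tendsto_poly_hpoly:
  assumes "s \<longlonglongrightarrow> (a, b)"
  shows "(\<lambda>k. poly (hpoly (fst (s k)) (snd (s k))) x) \<longlonglongrightarrow> poly (hpoly a b) x"
proof -
  have "(\<lambda>k. fst (s k)) \<longlonglongrightarrow> a" "(\<lambda>k. snd (s k)) \<longlonglongrightarrow> b"
    using tendsto_fst[OF assms] tendsto_snd[OF assms] by simp_all
  then show ?thesis unfolding poly_hpoly by (intro tendsto_intros)
qed

lemma poly_sum_list_map: "poly (\<Sum>g\<leftarrow>gs. f g) x = (\<Sum>g\<leftarrow>gs. poly (f g) x)"
  by (induct gs) auto

lemma sum_list_squares_nonneg: "0 \<le> (\<Sum>g\<leftarrow>gs. (f g)\<^sup>2 :: real)"
  by (induct gs) auto

lemma degree_fst_le_delta: "degree (fst g) \<le> delta g"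
  by (simp add: delta_def)

lemma degree_snd_le_delta: "snd g \<noteq> 0 \<Longrightarrow> degree (snd g) + 2 \<le> delta g"
  by (simp add: delta_def)


subsection \<open>Sums of squares in evaluated form\<close>

lemma sos_bounded_mono: "sos_bounded a b g e \<Longrightarrow> e \<le> e' \<Longrightarrow> sos_bounded a b g e'"
  unfolding sos_bounded_def by (meson order_trans)

text \<open>N is attained whenever it is finite, so bounding N means exhibiting one representation.\<close>
lemma Nfun_le_iff: "Nfun p \<le> enat n \<longleftrightarrow> sos_bounded (fst p) (snd p) one_minus_sq n"
proof
  assume "sos_bounded (fst p) (snd p) one_minus_sq n"
  then show "Nfun p \<le> enat n" unfolding Nfun_def theta_def by (auto intro: Inf_lower)
next
  let ?S = "{enat e | e. sos_bounded (fst p) (snd p) one_minus_sq e}"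
  assume le: "Nfun p \<le> enat n"
  have "?S \<noteq> {}"
  proof
    assume "?S = {}"
    then have "Nfun p = \<infinity>" unfolding Nfun_def theta_def by (simp add: Inf_enat_def)
    with le show False by simp
  qed
  then have "Inf ?S \<in> ?S" unfolding Inf_enat_def by (auto intro: LeastI)
  then obtain e where e: "Inf ?S = enat e" "sos_bounded (fst p) (snd p) one_minus_sq e" by auto
  with le have "e \<le> n" unfolding Nfun_def theta_def by simp
  with e show "sos_bounded (fst p) (snd p) one_minus_sq n" using sos_bounded_mono by blast
qed

definition sos_rep :: "real \<Rightarrow> real \<Rightarrow> nat \<Rightarrow> (real poly \<times> real poly) list \<Rightarrow> bool" where
  "sos_rep a b n gs \<longleftrightarrow> (\<forall>g\<in>set gs. delta g \<le> n) \<and>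
     (\<forall>x. 1 - x\<^sup>2 = (\<Sum>g\<leftarrow>gs. poly (fst g) x ^ 2 - poly (snd g) x ^ 2 * poly (fpoly a b) x)) \<and>
     (\<forall>x. (\<Sum>g\<leftarrow>gs. poly (fst g) x * poly (snd g) x) = 0)"

text \<open>Polynomial identities hold iff they hold pointwise, so sos_bounded is equivalent to the
  existence of a list satisfying (R).\<close>
lemma sos_bounded_iff_rep: "sos_bounded a b one_minus_sq n \<longleftrightarrow> (\<exists>gs. sos_rep a b n gs)"
proof -
  have poly_eq: "p = q \<longleftrightarrow> (\<forall>x. poly p x = poly q x)" for p q :: "real poly"
    by (metis ext poly_eq_poly_eq_iff)
  have fst_part: "poly (\<Sum>gi\<leftarrow>gs. fst (cmult a b gi gi)) x
      = (\<Sum>g\<leftarrow>gs. poly (fst g) x ^ 2 - poly (snd g) x ^ 2 * poly (fpoly a b) x)" for gs x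
    by (simp add: poly_sum_list_map cmult_def power2_eq_square)
  have snd_part: "poly (\<Sum>gi\<leftarrow>gs. snd (cmult a b gi gi)) x
      = 2 * (\<Sum>g\<leftarrow>gs. poly (fst g) x * poly (snd g) x)" for gs x
    by (simp add: poly_sum_list_map cmult_def sum_list_const_mult[symmetric] mult.commute)
  have "poly [:1, 0, -1:] x = 1 - x\<^sup>2" for x :: real
    by (simp add: power2_eq_square)
  then show ?thesis
    unfolding sos_bounded_def sos_rep_def poly_eq[of "fst _"] poly_eq[of "snd _"]
    by (simp add: fst_part snd_part)
qed

lemma sos_rep_weighted_identity:
  assumes "sos_rep a b n gs"
  shows "(1 - x\<^sup>2) * (1 - poly (hpoly a b) x * (\<Sum>g\<leftarrow>gs. poly (snd g) x ^ 2))
           = (\<Sum>g\<leftarrow>gs. poly (fst g) x ^ 2)"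
proof -
  have "1 - x\<^sup>2 = (\<Sum>g\<leftarrow>gs. poly (fst g) x ^ 2 - poly (snd g) x ^ 2 * poly (fpoly a b) x)"
    using assms unfolding sos_rep_def by simp
  also have "\<dots> = (\<Sum>g\<leftarrow>gs. poly (fst g) x ^ 2)
                    - (\<Sum>g\<leftarrow>gs. poly (snd g) x ^ 2) * ((x\<^sup>2 - 1) * poly (hpoly a b) x)"
    by (simp add: sum_list_subtractf sum_list_mult_const poly_fpoly)
  finally show ?thesis by (simp add: algebra_simps)
qed

lemma sos_rep_inside:
  assumes rep: "sos_rep a b n gs" and x: "\<bar>x\<bar> < 1" and h: "poly (hpoly a b) x > 0"
  shows "(\<Sum>g\<leftarrow>gs. poly (fst g) x ^ 2) \<le> 1"
    and "(\<Sum>g\<leftarrow>gs. poly (snd g) x ^ 2) \<le> 1 / poly (hpoly a b) x"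
proof -
  let ?h = "poly (hpoly a b) x" and ?V = "\<Sum>g\<leftarrow>gs. poly (snd g) x ^ 2"
  have x2: "0 < 1 - x\<^sup>2" "1 - x\<^sup>2 \<le> 1" using x by (simp_all add: abs_square_less_1)
  have "0 \<le> (1 - x\<^sup>2) * (1 - ?h * ?V)"
    using sos_rep_weighted_identity[OF rep] sum_list_squares_nonneg by metis
  then have w0: "0 \<le> 1 - ?h * ?V" using x2 by (simp add: zero_le_mult_iff)
  have w1: "1 - ?h * ?V \<le> 1" using h sum_list_squares_nonneg[of "\<lambda>g. poly (snd g) x" gs] by simp
  have "(1 - x\<^sup>2) * (1 - ?h * ?V) \<le> 1" using x2 w0 w1 by (intro mult_le_one) auto
  then show "(\<Sum>g\<leftarrow>gs. poly (fst g) x ^ 2) \<le> 1"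
    using sos_rep_weighted_identity[OF rep] by simp
  show "?V \<le> 1 / ?h" using w0 h by (simp add: field_simps)
qed

lemma sos_rep_outside:
  assumes rep: "sos_rep a b n gs" and x: "\<bar>x\<bar> > 1"
  shows "1 \<le> poly (hpoly a b) x * (\<Sum>g\<leftarrow>gs. poly (snd g) x ^ 2)"
proof -
  have "1 < \<bar>x\<bar> * \<bar>x\<bar>" using x by (metis less_1_mult)
  then have "1 - x\<^sup>2 < 0" by (simp add: power2_eq_square)
  moreover have "0 \<le> (1 - x\<^sup>2) * (1 - poly (hpoly a b) x * (\<Sum>g\<leftarrow>gs. poly (snd g) x ^ 2))"
    using sos_rep_weighted_identity[OF rep] sum_list_squares_nonneg by metis
  ultimately have "1 - poly (hpoly a b) x * (\<Sum>g\<leftarrow>gs. poly (snd g) x ^ 2) \<le> 0"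
    by (simp add: zero_le_mult_iff)
  then show ?thesis by simp
qed


subsection \<open>Lagrange interpolation\<close>

definition lagrange_basis :: "(nat \<Rightarrow> 'a::field) \<Rightarrow> nat \<Rightarrow> nat \<Rightarrow> 'a poly" where
  "lagrange_basis xs D j =
     smult (1 / (\<Prod>i\<in>{..D}-{j}. xs j - xs i)) (\<Prod>i\<in>{..D}-{j}. [:- xs i, 1:])"

lemma degree_lagrange_basis: "j \<le> D \<Longrightarrow> degree (lagrange_basis xs D j) \<le> D"
proof -
  have "degree (\<Prod>i\<in>{..D}-{j}. [:- xs i, 1:]) \<le> (\<Sum>i\<in>{..D}-{j}. degree [:- xs i, 1:])"
    using degree_prod_sum_le[of "{..D}-{j}" "\<lambda>i. [:- xs i, 1:]"] by (simp add: o_def)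
  also assume "j \<le> D"
  then have "(\<Sum>i\<in>{..D}-{j}. degree [:- xs i, 1:]) = D" by simp
  finally show ?thesis unfolding lagrange_basis_def by simp
qed

lemma poly_lagrange_basis_node:
  assumes "inj_on xs {..D}" "j \<le> D" "k \<le> D"
  shows "poly (lagrange_basis xs D j) (xs k) = (if k = j then 1 else 0)"
proof (cases "k = j")
  case True
  have "(\<Prod>i\<in>{..D}-{j}. xs j - xs i) \<noteq> 0" using assms by (auto simp: inj_on_def)
  then show ?thesis using True by (simp add: lagrange_basis_def poly_prod)
next
  case False
  have "(\<Prod>i\<in>{..D}-{j}. xs k - xs i) = 0" using False assms by (intro prod_zero) auto
  then show ?thesis using False by (simp add: lagrange_basis_def poly_prod)
qed

lemma lagrange_interpolation:
  assumes "inj_on xs {..D}" "degree q \<le> D"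
  shows "q = (\<Sum>j\<le>D. smult (poly q (xs j)) (lagrange_basis xs D j))"
proof (rule poly_eqI_degree[where A = "xs ` {..D}"])
  fix x assume "x \<in> xs ` {..D}"
  then obtain k where k: "k \<le> D" "x = xs k" by auto
  have "poly (\<Sum>j\<le>D. smult (poly q (xs j)) (lagrange_basis xs D j)) x
      = (\<Sum>j\<le>D. if j = k then poly q (xs k) else 0)"
    unfolding poly_sum by (rule sum.cong) (auto simp: k poly_lagrange_basis_node[OF assms(1) _ k(1)])
  then show "poly q x = poly (\<Sum>j\<le>D. smult (poly q (xs j)) (lagrange_basis xs D j)) x"
    using k by simp
next
  have card: "card (xs ` {..D}) = Suc D" using card_image[OF assms(1)] by simp
  then show "degree q < card (xs ` {..D})" using assms by simp
  have "degree (\<Sum>j\<le>D. smult (poly q (xs j)) (lagrange_basis xs D j)) \<le> D"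
    by (intro degree_sum_le) (auto intro: order_trans[OF degree_smult_le] degree_lagrange_basis)
  then show "degree (\<Sum>j\<le>D. smult (poly q (xs j)) (lagrange_basis xs D j)) < card (xs ` {..D})"
    using card by simp
qed


subsection \<open>Interpolation nodes\<close>

lemma nodes_in_interval:
  fixes u v :: real
  assumes "u < v"
  obtains xs :: "nat \<Rightarrow> real" where "inj xs" "\<And>j. u < xs j \<and> xs j < v"
proof -
  obtain xs :: "nat \<Rightarrow> real" where "inj xs" "range xs \<subseteq> {u<..<v}"
    using infinite_countable_subset[of "{u<..<v}"] assms by auto
  then have "u < xs j \<and> xs j < v" for j by (simp add: image_subset_iff)
  with \<open>inj xs\<close> show thesis by (rule that)
qed

text \<open>For (a,b) in P, h is positive on an interval ending at 1, since h(1) > 0.\<close>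
lemma Pset_positive_interval:
  assumes "(a, b) \<in> Pset"
  obtains u where "-1 \<le> u" "u < 1" "\<And>x. u < x \<Longrightarrow> x < 1 \<Longrightarrow> poly (hpoly a b) x > 0"
proof -
  let ?h = "poly (hpoly a b)"
  have h1: "?h 1 > 0" using assms unfolding Pset_def by auto
  have "?h \<midarrow>1\<rightarrow> ?h 1" using poly_isCont isCont_def by blast
  then obtain d where d: "d > 0" "\<And>x. x \<noteq> 1 \<Longrightarrow> norm (x - 1) < d \<Longrightarrow> norm (?h x - ?h 1) < ?h 1"
    using LIM_D[of ?h "?h 1" 1 "?h 1"] h1 by auto
  show ?thesis
  proof
    show "-1 \<le> 1 - min d 2" "1 - min d 2 < 1" using d(1) by auto
    fix x assume "1 - min d 2 < x" "x < 1"
    then have "norm (?h x - ?h 1) < ?h 1" by (intro d(2)) auto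
    then show "?h x > 0" by simp
  qed
qed

lemma P'set_root_and_positive_interval:
  assumes "(a, b) \<in> P'set - {(0, -1)}"
  obtains u v x0 where "-1 \<le> u" "u < v" "v \<le> 1"
    "\<And>x. u < x \<Longrightarrow> x < v \<Longrightarrow> poly (hpoly a b) x > 0"
    "\<bar>x0\<bar> \<ge> 1" "poly (hpoly a b) x0 = 0"
proof (cases "a\<^sup>2 = 4 * b \<and> 4 * b \<ge> 4")
  case True
  then have h: "poly (hpoly a b) x = (x + a / 2)\<^sup>2" for x
    by (simp add: poly_hpoly power2_eq_square field_simps)
  have "2\<^sup>2 \<le> a\<^sup>2" using True by simp
  then have a: "2 \<le> \<bar>a\<bar>" by (metis abs_le_square_iff abs_numeral)
  have "x + a / 2 \<noteq> 0" if "-1 < x" "x < 1" for x using a that by linarith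
  then show ?thesis using a by (intro that[of "-1" 1 "-a/2"]) (auto simp: h)
next
  case False
  then have ab: "\<bar>a\<bar> = b + 1" "b + 1 \<le> 2" "b \<noteq> -1" using assms unfolding P'set_def by auto
  then consider "a = b + 1" | "a = -(b + 1)" by linarith
  then show ?thesis
  proof cases
    case 1
    have h: "poly (hpoly a b) x = (x + 1) * (x + b)" for x
      unfolding poly_hpoly 1 by (simp add: algebra_simps power2_eq_square)
    have "poly (hpoly a b) x > 0" if "-b < x" for x
      unfolding h using that ab by (intro mult_pos_pos) auto
    then show ?thesis using ab by (intro that[of "-b" 1 "-1"]) (auto simp: h)
  next
    case 2
    have h: "poly (hpoly a b) x = (x - 1) * (x - b)" for x
      unfolding poly_hpoly 2 by (simp add: algebra_simps power2_eq_square)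
    have "poly (hpoly a b) x > 0" if "x < b" for x
      unfolding h using that ab by (intro mult_neg_neg) auto
    then show ?thesis using ab by (intro that[of "-1" b 1]) (auto simp: h)
  qed
qed


subsection \<open>Part (b): no representation of bounded degree near P'\<close>

text \<open>Interpolating V = sum v_g^2 (degree <= 2n) at nodes in (-1,1) where h > 0 bounds
  h(t) V(t) at any t with |t| > 1; combined with h V >= 1 there this gives a lower bound.\<close>
lemma sos_rep_interpolation_bound:
  assumes rep: "sos_rep a b n gs" and inj: "inj_on xs {..2*n}"
    and nodes: "\<And>j. j \<le> 2*n \<Longrightarrow> \<bar>xs j\<bar> < 1 \<and> poly (hpoly a b) (xs j) > 0"
    and t: "\<bar>t\<bar> > 1"
  shows "1 \<le> \<bar>poly (hpoly a b) t\<bar> *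
           (\<Sum>j\<le>2*n. \<bar>poly (lagrange_basis xs (2*n) j) t\<bar> / poly (hpoly a b) (xs j))"
proof -
  define V where "V = (\<Sum>g\<leftarrow>gs. snd g * snd g)"
  define B where "B = (\<Sum>j\<le>2*n. \<bar>poly (lagrange_basis xs (2*n) j) t\<bar> / poly (hpoly a b) (xs j))"
  have poly_V: "poly V x = (\<Sum>g\<leftarrow>gs. poly (snd g) x ^ 2)" for x
    by (simp add: V_def poly_sum_list_map power2_eq_square)
  have "degree (snd g * snd g) \<le> 2 * n" if "g \<in> set gs" for g
  proof -
    have "degree (snd g) \<le> n"
      using rep that degree_snd_le_delta[of g] unfolding sos_rep_def by (cases "snd g = 0") auto
    then show ?thesis using degree_mult_le[of "snd g" "snd g"] by linarith
  qed
  then have "degree V \<le> 2 * n"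
    unfolding V_def by (induct gs) (auto intro: order_trans[OF degree_add_le])
  then have "poly V t = (\<Sum>j\<le>2*n. poly V (xs j) * poly (lagrange_basis xs (2*n) j) t)"
    by (subst lagrange_interpolation[OF inj]) (simp_all add: poly_sum)
  also have "\<dots> \<le> B"
    unfolding B_def
  proof (rule sum_mono)
    fix j assume "j \<in> {..2*n}"
    then have V0: "0 \<le> poly V (xs j)" and V1: "poly V (xs j) \<le> 1 / poly (hpoly a b) (xs j)"
      using nodes sos_rep_inside(2)[OF rep] sum_list_squares_nonneg by (auto simp: poly_V)
    let ?L = "poly (lagrange_basis xs (2*n) j) t"
    have "poly V (xs j) * ?L \<le> poly V (xs j) * \<bar>?L\<bar>" using V0 by (intro mult_left_mono) auto
    also have "\<dots> \<le> 1 / poly (hpoly a b) (xs j) * \<bar>?L\<bar>" using V1 by (intro mult_right_mono) auto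
    finally show "poly V (xs j) * ?L \<le> \<bar>?L\<bar> / poly (hpoly a b) (xs j)" by simp
  qed
  finally have "poly V t \<le> B" .
  have "1 \<le> poly (hpoly a b) t * poly V t" using sos_rep_outside[OF rep t] by (simp add: poly_V)
  also have "\<dots> \<le> \<bar>poly (hpoly a b) t\<bar> * poly V t"
    using sum_list_squares_nonneg by (intro mult_right_mono) (auto simp: poly_V)
  also have "\<dots> \<le> \<bar>poly (hpoly a b) t\<bar> * B"
    using \<open>poly V t \<le> B\<close> by (intro mult_left_mono) auto
  finally show ?thesis unfolding B_def .
qed

lemma no_rep_near_root:
  fixes s :: "nat \<Rightarrow> real \<times> real"
  assumes lim: "s \<longlonglongrightarrow> (a, b)" and uv: "-1 \<le> u" "u < v" "v \<le> 1"
    and pos: "\<And>x. u < x \<Longrightarrow> x < v \<Longrightarrow> poly (hpoly a b) x > 0"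
    and root: "\<bar>x0\<bar> \<ge> 1" "poly (hpoly a b) x0 = 0"
  shows "eventually (\<lambda>k. \<not> sos_bounded (fst (s k)) (snd (s k)) one_minus_sq n) sequentially"
proof -
  obtain xs :: "nat \<Rightarrow> real" where inj: "inj xs" and xs: "\<And>j. u < xs j \<and> xs j < v"
    by (fact nodes_in_interval[OF uv(2)])
  have nodes: "\<bar>xs j\<bar> < 1" "poly (hpoly a b) (xs j) > 0" for j
    using xs[of j] uv pos by auto
  then have hne: "poly (hpoly a b) (xs j) \<noteq> 0" for j by (metis less_irrefl)
  define D where "D = 2 * n"
  define \<Psi> where "\<Psi> c d = (\<lambda>x. \<bar>poly (hpoly c d) x\<bar> *
     (\<Sum>j\<le>D. \<bar>poly (lagrange_basis xs D j) x\<bar> / poly (hpoly c d) (xs j)))" for c d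
  have "isCont (\<Psi> a b) x0"
    unfolding \<Psi>_def using hne by (intro continuous_intros) auto
  moreover have "\<Psi> a b x0 = 0" using root by (simp add: \<Psi>_def)
  ultimately have "\<Psi> a b \<midarrow>x0\<rightarrow> 0" by (simp add: isCont_def)
  then obtain d where d: "d > 0" "\<And>x. x \<noteq> x0 \<Longrightarrow> norm (x - x0) < d \<Longrightarrow> norm (\<Psi> a b x - 0) < 1"
    using LIM_D[of "\<Psi> a b" 0 x0 1] by auto
  define t where "t = x0 + sgn x0 * d / 2"
  have "t \<noteq> x0" "norm (t - x0) < d" using d(1) root(1) by (auto simp: t_def sgn_if)
  then have "\<Psi> a b t < 1" using d(2) by fastforce
  moreover have "\<bar>t\<bar> > 1" using d(1) root(1) by (auto simp: t_def sgn_if abs_if)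
  ultimately have t: "\<bar>t\<bar> > 1" "\<Psi> a b t < 1" by simp_all
  have "(\<lambda>k. \<Psi> (fst (s k)) (snd (s k)) t) \<longlonglongrightarrow> \<Psi> a b t"
    unfolding \<Psi>_def using hne by (intro tendsto_intros tendsto_poly_hpoly[OF lim]) auto
  then have ev_small: "eventually (\<lambda>k. \<Psi> (fst (s k)) (snd (s k)) t < 1) sequentially"
    using t(2) by (rule order_tendstoD)
  have ev_pos: "eventually (\<lambda>k. \<forall>j\<in>{..D}. poly (hpoly (fst (s k)) (snd (s k))) (xs j) > 0) sequentially"
    using nodes by (intro eventually_ball_finite ballI order_tendstoD(1)[OF tendsto_poly_hpoly[OF lim]]) auto
  show ?thesis
    using eventually_conj[OF ev_small ev_pos]
  proof (rule eventually_mono)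
    fix k assume k: "\<Psi> (fst (s k)) (snd (s k)) t < 1 \<and>
      (\<forall>j\<in>{..D}. poly (hpoly (fst (s k)) (snd (s k))) (xs j) > 0)"
    show "\<not> sos_bounded (fst (s k)) (snd (s k)) one_minus_sq n"
    proof
      assume "sos_bounded (fst (s k)) (snd (s k)) one_minus_sq n"
      then obtain gs where "sos_rep (fst (s k)) (snd (s k)) n gs" using sos_bounded_iff_rep by blast
      from sos_rep_interpolation_bound[OF this inj_on_subset[OF inj subset_UNIV] _ t(1)]
      have "1 \<le> \<Psi> (fst (s k)) (snd (s k)) t" using k nodes(1) unfolding \<Psi>_def D_def by auto
      with k show False by simp
    qed
  qed
qed


subsection \<open>Factorization of positive semidefinite forms\<close>

definition quad_form :: "nat \<Rightarrow> (nat \<Rightarrow> nat \<Rightarrow> real) \<Rightarrow> (nat \<Rightarrow> real) \<Rightarrow> real" where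
  "quad_form m G y = (\<Sum>s<m. \<Sum>t<m. G s t * y s * y t)"

lemma quad_form_cong: "(\<And>s. s < m \<Longrightarrow> y s = z s) \<Longrightarrow> quad_form m G y = quad_form m G z"
  unfolding quad_form_def by (intro sum.cong refl) auto

lemma quad_form_Suc:
  assumes "\<And>s. s < m \<Longrightarrow> G s m = G m s"
  shows "quad_form (Suc m) G y = quad_form m G y + 2 * y m * (\<Sum>t<m. G m t * y t) + G m m * (y m)\<^sup>2"
proof -
  have "quad_form (Suc m) G y = quad_form m G y + (\<Sum>s<m. G s m * y s * y m)
          + (\<Sum>t<m. G m t * y m * y t) + G m m * y m * y m"
    unfolding quad_form_def by (simp add: sum.distrib)
  moreover have "(\<Sum>s<m. G s m * y s * y m) = y m * (\<Sum>t<m. G m t * y t)"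
    by (simp add: sum_distrib_left assms mult_ac)
  moreover have "(\<Sum>t<m. G m t * y m * y t) = y m * (\<Sum>t<m. G m t * y t)"
    by (simp add: sum_distrib_left mult_ac)
  ultimately show ?thesis by (simp add: power2_eq_square)
qed

lemma psd_zero_diagonal_row:
  assumes sym: "\<And>s. s < m \<Longrightarrow> G s m = G m s" and psd: "\<And>y. 0 \<le> quad_form (Suc m) G y"
    and zero: "G m m = 0" and t: "t < m"
  shows "G m t = 0"
proof (rule ccontr)
  assume ne: "G m t \<noteq> 0"
  define lam where "lam = - (G t t + 1) / (2 * G m t)"
  define y where "y = (\<lambda>s. if s = m then lam else if s = t then 1 else (0::real))"
  have restrict: "quad_form m G y = G t t"
  proof -
    have "quad_form m G y = (\<Sum>s<m. \<Sum>t'<m. if s = t \<and> t' = t then G s t' else 0)"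
      unfolding quad_form_def by (intro sum.cong refl) (auto simp: y_def)
    also have "\<dots> = (\<Sum>s<m. if s = t then G s t else 0)"
      using t by (intro sum.cong refl) auto
    finally show ?thesis using t by simp
  qed
  have "(\<Sum>t'<m. G m t' * y t') = G m t" using t by (simp add: y_def if_distrib sum.If_cases)
  then have "quad_form (Suc m) G y = G t t + 2 * lam * G m t"
    using quad_form_Suc[of m G y, OF sym] restrict zero by (simp add: y_def)
  also have "\<dots> = -1" using ne by (simp add: lam_def field_simps)
  finally show False using psd[of y] by simp
qed

text \<open>Completing the square in the last variable (Schur complement).\<close>
lemma psd_schur_complement:
  assumes sym: "\<And>s. s < m \<Longrightarrow> G s m = G m s" and psd: "\<And>y. 0 \<le> quad_form (Suc m) G y"
    and c: "G m m > 0"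
  shows "0 \<le> quad_form m (\<lambda>s t. G s t - G m s * G m t / G m m) y"
proof -
  define c where "c = G m m"
  define L where "L = (\<Sum>t<m. G m t * y t)"
  define z where "z = y(m := - L / c)"
  have "(\<Sum>t<m. G m t * z t) = L" unfolding L_def z_def by (intro sum.cong) auto
  moreover have "quad_form m G z = quad_form m G y" unfolding z_def by (rule quad_form_cong) auto
  moreover have "2 * (- L / c) * L + c * (- L / c)\<^sup>2 = - (L * L / c)"
    using c by (simp add: c_def field_simps power2_eq_square)
  ultimately have "quad_form (Suc m) G z = quad_form m G y - L * L / c"
    using quad_form_Suc[of m G z, OF sym] by (simp add: z_def c_def)
  also have "\<dots> = quad_form m (\<lambda>s t. G s t - G m s * G m t / G m m) y"
  proof -
    have "(\<Sum>s<m. \<Sum>t<m. (G m s * y s) * (G m t * y t) / c) = L * L / c"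
      unfolding L_def by (simp add: sum_divide_distrib[symmetric] sum_product)
    then show ?thesis
      unfolding quad_form_def c_def by (simp add: sum_subtractf algebra_simps)
  qed
  finally show ?thesis using psd[of z] by simp
qed

lemma psd_split_last:
  assumes sym: "\<forall>s<Suc m. \<forall>t<Suc m. G s t = G t s" and psd: "\<forall>y. 0 \<le> quad_form (Suc m) G y"
  obtains r where "\<forall>s<m. \<forall>t<m. G s t - r s * r t = G t s - r t * r s"
    "\<forall>y. 0 \<le> quad_form m (\<lambda>s t. G s t - r s * r t) y"
    "\<And>s t. s < Suc m \<Longrightarrow> t < Suc m \<Longrightarrow> (s = m \<or> t = m) \<Longrightarrow> G s t = r s * r t"
proof -
  have sym_m: "\<And>s. s < m \<Longrightarrow> G s m = G m s" using sym by auto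
  have "0 \<le> quad_form (Suc m) G (\<lambda>s. if s = m then 1 else 0)" using psd by blast
  also have "\<dots> = G m m" by (simp add: quad_form_Suc[of m G, OF sym_m]) (simp add: quad_form_def)
  finally have "0 \<le> G m m" .
  then consider "G m m = 0" | "G m m > 0" by linarith
  then show ?thesis
  proof cases
    case 1
    have row: "G m t = 0" if "t < m" for t
      using psd_zero_diagonal_row[of m G, OF sym_m _ 1 that] psd by blast
    show ?thesis
    proof (rule that[of "\<lambda>_. 0"])
      show "\<forall>y. 0 \<le> quad_form m (\<lambda>s t. G s t - 0 * 0) y"
      proof
        fix y
        have "0 \<le> quad_form (Suc m) G (y(m := 0))" using psd by blast
        also have "\<dots> = quad_form m G y"
          using quad_form_Suc[of m G "y(m := 0)", OF sym_m] quad_form_cong[of m "y(m := 0)" y] by simp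
        finally show "0 \<le> quad_form m (\<lambda>s t. G s t - 0 * 0) y" by simp
      qed
      show "G s t = 0 * 0" if "s < Suc m" "t < Suc m" "s = m \<or> t = m" for s t
        using that row sym_m 1 by (auto simp: less_Suc_eq)
      show "\<forall>s<m. \<forall>t<m. G s t - 0 * 0 = G t s - 0 * 0"
        using sym by simp
    qed
  next
    case 2
    define r where "r s = G m s / sqrt (G m m)" for s
    have "sqrt (G m m) * sqrt (G m m) = G m m" using 2 by simp
    then have rr: "r s * r t = G m s * G m t / G m m" for s t
      unfolding r_def times_divide_times_eq by simp
    show ?thesis
    proof (rule that[of r])
      show "\<forall>y. 0 \<le> quad_form m (\<lambda>s t. G s t - r s * r t) y"
        unfolding rr using psd_schur_complement[of m G, OF sym_m _ 2] psd by blast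
      show "G s t = r s * r t" if "s < Suc m" "t < Suc m" "s = m \<or> t = m" for s t
      proof (cases "s = m")
        case True
        then show ?thesis using 2 unfolding rr by simp
      next
        case False
        then have "s < m" "t = m" using that by auto
        then show ?thesis using 2 sym_m[of s] unfolding rr by simp
      qed
      show "\<forall>s<m. \<forall>t<m. G s t - r s * r t = G t s - r t * r s"
        using sym by (simp add: mult.commute)
    qed
  qed
qed

lemma psd_factorization:
  "(\<forall>s<m. \<forall>t<m. G s t = G t s) \<Longrightarrow> (\<forall>y. 0 \<le> quad_form m G y) \<Longrightarrow>
   \<exists>d. \<forall>s<m. \<forall>t<m. G s t = (\<Sum>j<m. d j s * d j t)"
proof (induction m arbitrary: G)
  case 0
  then show ?case by simp
next
  case (Suc m)
  obtain r where r: "\<forall>s<m. \<forall>t<m. G s t - r s * r t = G t s - r t * r s"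
    "\<forall>y. 0 \<le> quad_form m (\<lambda>s t. G s t - r s * r t) y"
    "\<And>s t. s < Suc m \<Longrightarrow> t < Suc m \<Longrightarrow> (s = m \<or> t = m) \<Longrightarrow> G s t = r s * r t"
    using psd_split_last[OF Suc.prems] by blast
  obtain d' where d': "\<forall>s<m. \<forall>t<m. G s t - r s * r t = (\<Sum>j<m. d' j s * d' j t)"
    using Suc.IH[OF r(1,2)] by blast
  define d where "d j s = (if j < m then (if s < m then d' j s else 0) else r s)" for j s
  have "G s t = (\<Sum>j<Suc m. d j s * d j t)" if "s < Suc m" "t < Suc m" for s t
  proof (cases "s < m \<and> t < m")
    case True
    then show ?thesis using d' by (simp add: d_def algebra_simps)
  next
    case False
    then have "(\<Sum>j<m. d j s * d j t) = 0" by (auto simp: d_def intro!: sum.neutral)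
    moreover have "s = m \<or> t = m" using False that by auto
    ultimately show ?thesis using r(3)[OF that] by (simp add: d_def)
  qed
  then show ?case by blast
qed


subsection \<open>Gram matrices of representations\<close>

text \<open>For delta(g) <= n, u_g is determined by its values at nodes x_0..x_n and v_g by its
  values at x_0..x_{n-2}; together these gram_dim n numbers are the coordinates of g.\<close>
definition gram_dim :: "nat \<Rightarrow> nat" where
  "gram_dim n = Suc n + (n - 1)"

definition basis_u :: "(nat \<Rightarrow> real) \<Rightarrow> nat \<Rightarrow> nat \<Rightarrow> real poly" where
  "basis_u xs n s = (if s \<le> n then lagrange_basis xs n s else 0)"

definition basis_v :: "(nat \<Rightarrow> real) \<Rightarrow> nat \<Rightarrow> nat \<Rightarrow> real poly" where
  "basis_v xs n s = (if s \<le> n then 0 else lagrange_basis xs (n - 2) (s - Suc n))"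

definition coords :: "(nat \<Rightarrow> real) \<Rightarrow> nat \<Rightarrow> real poly \<times> real poly \<Rightarrow> nat \<Rightarrow> real" where
  "coords xs n g s = (if s \<le> n then poly (fst g) (xs s) else poly (snd g) (xs (s - Suc n)))"

definition from_coords :: "(nat \<Rightarrow> real) \<Rightarrow> nat \<Rightarrow> (nat \<Rightarrow> real) \<Rightarrow> real poly \<times> real poly" where
  "from_coords xs n c = (\<Sum>s<gram_dim n. smult (c s) (basis_u xs n s),
                          \<Sum>s<gram_dim n. smult (c s) (basis_v xs n s))"

lemma fst_from_coords:
  "fst (from_coords xs n c) = (\<Sum>s\<le>n. smult (c s) (lagrange_basis xs n s))"
  unfolding from_coords_def
  by (simp, intro sum.mono_neutral_cong_right) (auto simp: basis_u_def gram_dim_def)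

lemma snd_from_coords:
  "snd (from_coords xs n c) = (if n < 2 then 0
     else (\<Sum>j\<le>n - 2. smult (c (j + Suc n)) (lagrange_basis xs (n - 2) j)))"
proof (cases "n < 2")
  case True
  then show ?thesis by (auto simp: from_coords_def basis_v_def gram_dim_def intro!: sum.neutral)
next
  case False
  then have dim: "gram_dim n = (n - 1) + Suc n" and idx: "{0..<n - 1} = {..n - 2}"
    by (auto simp: gram_dim_def)
  have "snd (from_coords xs n c) = (\<Sum>s\<in>{Suc n..<gram_dim n}. smult (c s) (basis_v xs n s))"
    unfolding from_coords_def by (simp, intro sum.mono_neutral_right) (auto simp: basis_v_def)
  also have "\<dots> = (\<Sum>j\<in>{0..<n - 1}. smult (c (j + Suc n)) (basis_v xs n (j + Suc n)))"
    unfolding dim using sum.shift_bounds_nat_ivl[of "\<lambda>s. smult (c s) (basis_v xs n s)" 0 "Suc n" "n - 1"]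
    by simp
  also have "\<dots> = (\<Sum>j\<le>n - 2. smult (c (j + Suc n)) (lagrange_basis xs (n - 2) j))"
    unfolding idx by (intro sum.cong) (auto simp: basis_v_def)
  finally show ?thesis using False by simp
qed

lemma from_coords_coords:
  assumes inj: "inj xs" and dg: "delta g \<le> n"
  shows "from_coords xs n (coords xs n g) = g"
proof -
  have inj_on: "inj_on xs A" for A using inj by (rule inj_on_subset) simp
  have "fst (from_coords xs n (coords xs n g)) = fst g"
    unfolding fst_from_coords using lagrange_interpolation[OF inj_on] degree_fst_le_delta[of g] dg
    by (simp add: coords_def)
  moreover have "snd (from_coords xs n (coords xs n g)) = snd g"
  proof (cases "snd g = 0")
    case True
    then show ?thesis by (simp add: snd_from_coords coords_def)
  next
    case False
    then have dv: "degree (snd g) \<le> n - 2" "\<not> n < 2"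
      using degree_snd_le_delta[of g] dg by auto
    then show ?thesis
      unfolding snd_from_coords using lagrange_interpolation[OF inj_on dv(1)]
      by (simp add: coords_def)
  qed
  ultimately show ?thesis by (simp add: prod_eq_iff)
qed

lemma delta_from_coords: "delta (from_coords xs n c) \<le> n"
proof -
  have "degree (fst (from_coords xs n c)) \<le> n"
    unfolding fst_from_coords
    by (intro degree_sum_le) (auto intro: order_trans[OF degree_smult_le] degree_lagrange_basis)
  moreover have "degree (snd (from_coords xs n c)) + 2 \<le> n" if "snd (from_coords xs n c) \<noteq> 0"
  proof -
    have "\<not> n < 2" using that by (auto simp: snd_from_coords)
    moreover have "degree (\<Sum>j\<le>n - 2. smult (c (j + Suc n)) (lagrange_basis xs (n - 2) j)) \<le> n - 2"
      by (intro degree_sum_le) (auto intro: order_trans[OF degree_smult_le] degree_lagrange_basis)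
    ultimately show ?thesis by (simp add: snd_from_coords)
  qed
  ultimately show ?thesis by (auto simp: delta_def)
qed

lemma poly_from_coords:
  "poly (fst (from_coords xs n c)) x = (\<Sum>s<gram_dim n. c s * poly (basis_u xs n s) x)"
  "poly (snd (from_coords xs n c)) x = (\<Sum>s<gram_dim n. c s * poly (basis_v xs n s) x)"
  by (simp_all add: from_coords_def poly_sum)

lemma sum_list_bilinear:
  fixes c :: "'g \<Rightarrow> nat \<Rightarrow> real"
  shows "(\<Sum>g\<leftarrow>gs. (\<Sum>s<m. c g s * U s) * (\<Sum>t<m. c g t * V t)) =
         (\<Sum>s<m. \<Sum>t<m. (\<Sum>g\<leftarrow>gs. c g s * c g t) * U s * V t)"
proof (induction gs)
  case (Cons g gs)
  have "(\<Sum>s<m. c g s * U s) * (\<Sum>t<m. c g t * V t) = (\<Sum>s<m. \<Sum>t<m. (c g s * c g t) * U s * V t)"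
    by (simp add: sum_product mult_ac)
  then show ?case using Cons by (simp add: sum.distrib[symmetric] algebra_simps)
qed simp

definition gram_form ::
  "(nat \<Rightarrow> nat \<Rightarrow> real) \<Rightarrow> nat \<Rightarrow> (nat \<Rightarrow> real poly) \<Rightarrow> (nat \<Rightarrow> real poly) \<Rightarrow> real \<Rightarrow> real" where
  "gram_form G m P Q x = (\<Sum>s<m. \<Sum>t<m. G s t * poly (P s) x * poly (Q t) x)"

lemma gram_form_cong:
  "(\<And>s t. s < m \<Longrightarrow> t < m \<Longrightarrow> G s t = H s t) \<Longrightarrow> gram_form G m P Q x = gram_form H m P Q x"
  unfolding gram_form_def by (intro sum.cong refl) auto

lemma sum_list_gram_form:
  "(\<Sum>l\<leftarrow>L. (\<Sum>s<m. e l s * poly (P s) x) * (\<Sum>t<m. e l t * poly (Q t) x))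
     = gram_form (\<lambda>s t. \<Sum>l\<leftarrow>L. e l s * e l t) m P Q x"
  unfolding gram_form_def by (rule sum_list_bilinear)

definition gram_rep :: "(nat \<Rightarrow> real) \<Rightarrow> nat \<Rightarrow> real \<Rightarrow> real \<Rightarrow> (nat \<Rightarrow> nat \<Rightarrow> real) \<Rightarrow> bool" where
  "gram_rep xs n a b G \<longleftrightarrow>
     (\<forall>s<gram_dim n. \<forall>t<gram_dim n. G s t = G t s) \<and> (\<forall>y. 0 \<le> quad_form (gram_dim n) G y) \<and>
     (\<forall>x. 1 - x\<^sup>2 = gram_form G (gram_dim n) (basis_u xs n) (basis_u xs n) x
                     - gram_form G (gram_dim n) (basis_v xs n) (basis_v xs n) x * poly (fpoly a b) x) \<and>
     (\<forall>x. gram_form G (gram_dim n) (basis_u xs n) (basis_v xs n) x = 0)"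

definition gram :: "(nat \<Rightarrow> real) \<Rightarrow> nat \<Rightarrow> (real poly \<times> real poly) list \<Rightarrow> nat \<Rightarrow> nat \<Rightarrow> real" where
  "gram xs n gs s t = (\<Sum>g\<leftarrow>gs. coords xs n g s * coords xs n g t)"

text \<open>(R) with squares written as products, in the shape matched by Gram forms.\<close>
lemma sos_rep_iff_identities:
  "sos_rep a b n gs \<longleftrightarrow> (\<forall>g\<in>set gs. delta g \<le> n) \<and>
     (\<forall>x. 1 - x\<^sup>2 = (\<Sum>g\<leftarrow>gs. poly (fst g) x * poly (fst g) x)
          - (\<Sum>g\<leftarrow>gs. poly (snd g) x * poly (snd g) x) * poly (fpoly a b) x) \<and>
     (\<forall>x. (\<Sum>g\<leftarrow>gs. poly (fst g) x * poly (snd g) x) = 0)"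
  unfolding sos_rep_def by (simp add: sum_list_subtractf sum_list_mult_const power2_eq_square)

lemma gram_rep_of_sos_rep:
  assumes inj: "inj xs" and rep: "sos_rep a b n gs"
  shows "gram_rep xs n a b (gram xs n gs)"
proof -
  let ?m = "gram_dim n" and ?U = "basis_u xs n" and ?V = "basis_v xs n"
  have coords: "poly (fst g) x = (\<Sum>s<?m. coords xs n g s * poly (?U s) x)"
    "poly (snd g) x = (\<Sum>s<?m. coords xs n g s * poly (?V s) x)" if "g \<in> set gs" for g x
    using rep that from_coords_coords[OF inj, of g n] poly_from_coords[of xs n "coords xs n g" x]
    unfolding sos_rep_def by auto
  have "(\<Sum>g\<leftarrow>gs. poly (fst g) x * poly (fst g) x) = gram_form (gram xs n gs) ?m ?U ?U x" for x
  proof -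
    have "(\<Sum>g\<leftarrow>gs. poly (fst g) x * poly (fst g) x) =
      (\<Sum>g\<leftarrow>gs. (\<Sum>s<?m. coords xs n g s * poly (?U s) x) * (\<Sum>t<?m. coords xs n g t * poly (?U t) x))"
      using coords by (intro arg_cong[where f=sum_list] map_cong) auto
    then show ?thesis by (simp add: sum_list_gram_form gram_def[abs_def])
  qed
  moreover have "(\<Sum>g\<leftarrow>gs. poly (snd g) x * poly (snd g) x) = gram_form (gram xs n gs) ?m ?V ?V x" for x
  proof -
    have "(\<Sum>g\<leftarrow>gs. poly (snd g) x * poly (snd g) x) =
      (\<Sum>g\<leftarrow>gs. (\<Sum>s<?m. coords xs n g s * poly (?V s) x) * (\<Sum>t<?m. coords xs n g t * poly (?V t) x))"
      using coords by (intro arg_cong[where f=sum_list] map_cong) auto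
    then show ?thesis by (simp add: sum_list_gram_form gram_def[abs_def])
  qed
  moreover have "(\<Sum>g\<leftarrow>gs. poly (fst g) x * poly (snd g) x) = gram_form (gram xs n gs) ?m ?U ?V x" for x
  proof -
    have "(\<Sum>g\<leftarrow>gs. poly (fst g) x * poly (snd g) x) =
      (\<Sum>g\<leftarrow>gs. (\<Sum>s<?m. coords xs n g s * poly (?U s) x) * (\<Sum>t<?m. coords xs n g t * poly (?V t) x))"
      using coords by (intro arg_cong[where f=sum_list] map_cong) auto
    then show ?thesis by (simp add: sum_list_gram_form gram_def[abs_def])
  qed
  moreover have "0 \<le> quad_form ?m (gram xs n gs) y" for y
  proof -
    have "quad_form ?m (gram xs n gs) y
        = (\<Sum>g\<leftarrow>gs. (\<Sum>s<?m. coords xs n g s * y s) * (\<Sum>t<?m. coords xs n g t * y t))"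
      unfolding quad_form_def gram_def by (simp add: sum_list_bilinear)
    also have "\<dots> \<ge> 0" by (induct gs) auto
    finally show ?thesis .
  qed
  ultimately show ?thesis
    using rep unfolding sos_rep_iff_identities gram_rep_def by (simp add: gram_def mult.commute)
qed

text \<open>Conversely, factoring a Gram matrix as a sum of rank-one matrices d_j d_j^T gives a
  representation with the elements from_coords d_j.\<close>
lemma sos_rep_of_gram_rep:
  assumes "gram_rep xs n a b G"
  shows "\<exists>gs. sos_rep a b n gs"
proof -
  let ?m = "gram_dim n"
  obtain d where d: "\<forall>s<?m. \<forall>t<?m. G s t = (\<Sum>j<?m. d j s * d j t)"
    using psd_factorization assms unfolding gram_rep_def by blast
  define gs where "gs = map (\<lambda>j. from_coords xs n (d j)) [0..<?m]"
  have G: "gram_form G ?m P Q x = gram_form (\<lambda>s t. \<Sum>j\<leftarrow>[0..<?m]. d j s * d j t) ?m P Q x"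
    for P Q x
    using d by (intro gram_form_cong) (simp add: sum_list_distinct_conv_sum_set atLeast0LessThan)
  have "sos_rep a b n gs"
    using assms unfolding sos_rep_iff_identities gram_rep_def G
    by (simp add: gs_def o_def delta_from_coords poly_from_coords sum_list_gram_form)
  then show ?thesis by blast
qed

text \<open>The Gram entries are bounded by data of h at the nodes: the diagonal entries are the
  sums of squares u_g(x_j)^2 or v_g(x_j)^2, and |G_st| <= (G_ss + G_tt)/2.\<close>
lemma gram_entry_bound:
  assumes rep: "sos_rep a b n gs"
    and nodes: "\<And>j. j \<le> n \<Longrightarrow> \<bar>xs j\<bar> < 1 \<and> poly (hpoly a b) (xs j) > 0"
    and st: "s < gram_dim n" "t < gram_dim n"
  shows "\<bar>gram xs n gs s t\<bar> \<le> (\<Sum>j\<le>n. 1 + 1 / poly (hpoly a b) (xs j))"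
proof -
  define K where "K = (\<Sum>j\<le>n. 1 + 1 / poly (hpoly a b) (xs j))"
  have diag: "gram xs n gs s s \<le> K" if s: "s < gram_dim n" for s
  proof -
    obtain j where j: "j \<le> n"
      "gram xs n gs s s \<le> 1 \<or> gram xs n gs s s \<le> 1 / poly (hpoly a b) (xs j)"
    proof (cases "s \<le> n")
      case True
      then show ?thesis using that[of s] sos_rep_inside(1)[OF rep] nodes
        by (simp add: gram_def coords_def power2_eq_square)
    next
      case False
      then show ?thesis using that[of "s - Suc n"] s sos_rep_inside(2)[OF rep] nodes
        by (simp add: gram_def coords_def power2_eq_square gram_dim_def)
    qed
    have inv_nonneg: "0 \<le> 1 / poly (hpoly a b) (xs i)" if "i \<le> n" for i
      using nodes[OF that] by simp
    then have "1 + 1 / poly (hpoly a b) (xs j) \<le> K"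
      unfolding K_def using j(1) by (intro member_le_sum) (auto intro: add_nonneg_nonneg)
    then show ?thesis using j inv_nonneg[OF j(1)] by linarith
  qed
  have cs: "\<bar>\<Sum>g\<leftarrow>gs. f g * h g\<bar> \<le> ((\<Sum>g\<leftarrow>gs. f g * f g) + (\<Sum>g\<leftarrow>gs. h g * h g)) / 2"
    for f h :: "_ \<Rightarrow> real"
  proof (induction gs)
    case (Cons g gs)
    have "2 * \<bar>f g * h g\<bar> \<le> f g * f g + h g * h g"
      using sum_squares_ge_zero[of "\<bar>f g\<bar> - \<bar>h g\<bar>" 0] by (simp add: algebra_simps abs_mult)
    then show ?case using Cons abs_triangle_ineq[of "f g * h g" "\<Sum>g\<leftarrow>gs. f g * h g"] by simp
  qed simp
  have "\<bar>gram xs n gs s t\<bar> \<le> (gram xs n gs s s + gram xs n gs t t) / 2"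
    unfolding gram_def by (rule cs)
  then show ?thesis using diag[OF st(1)] diag[OF st(2)] unfolding K_def by simp
qed


subsection \<open>Part (a): closedness\<close>

text \<open>Gram matrices for converging parameters that converge entrywise have a Gram matrix
  for the limit parameters as their limit: every defining condition is closed.\<close>
lemma gram_rep_limit:
  fixes q :: "nat \<Rightarrow> real \<times> real"
  assumes lim: "q \<longlonglongrightarrow> (a, b)" and reps: "\<And>k. gram_rep xs n (fst (q k)) (snd (q k)) (G k)"
    and conv: "\<And>s t. s < gram_dim n \<Longrightarrow> t < gram_dim n \<Longrightarrow> (\<lambda>k. G k s t) \<longlonglongrightarrow> H s t"
  shows "gram_rep xs n a b H"
  unfolding gram_rep_def
proof (intro conjI allI impI)
  fix s t assume st: "s < gram_dim n" "t < gram_dim n"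
  have "G k t s = G k s t" for k using reps[of k] st unfolding gram_rep_def by blast
  then have "(\<lambda>k. G k s t) \<longlonglongrightarrow> H t s" using conv[OF st(2,1)] by simp
  then show "H s t = H t s" using conv[OF st] LIMSEQ_unique by blast
next
  fix y
  have "(\<lambda>k. quad_form (gram_dim n) (G k) y) \<longlonglongrightarrow> quad_form (gram_dim n) H y"
    unfolding quad_form_def by (intro tendsto_intros conv) auto
  moreover have "0 \<le> quad_form (gram_dim n) (G k) y" for k
    using reps[of k] unfolding gram_rep_def by blast
  ultimately show "0 \<le> quad_form (gram_dim n) H y" by (intro LIMSEQ_le_const) auto
next
  fix x
  let ?m = "gram_dim n" and ?U = "basis_u xs n" and ?V = "basis_v xs n"
  have gf: "(\<lambda>k. gram_form (G k) ?m P Q x) \<longlonglongrightarrow> gram_form H ?m P Q x" for P Q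
    unfolding gram_form_def by (intro tendsto_intros conv) auto
  have "(\<lambda>k. poly (fpoly (fst (q k)) (snd (q k))) x) \<longlonglongrightarrow> poly (fpoly a b) x"
    unfolding poly_fpoly by (intro tendsto_intros tendsto_poly_hpoly[OF lim])
  then have "(\<lambda>k. gram_form (G k) ?m ?U ?U x - gram_form (G k) ?m ?V ?V x * poly (fpoly (fst (q k)) (snd (q k))) x)
      \<longlonglongrightarrow> gram_form H ?m ?U ?U x - gram_form H ?m ?V ?V x * poly (fpoly a b) x"
    by (intro tendsto_intros gf)
  moreover have "gram_form (G k) ?m ?U ?U x - gram_form (G k) ?m ?V ?V x * poly (fpoly (fst (q k)) (snd (q k))) x
      = 1 - x\<^sup>2" for k
    using reps[of k] unfolding gram_rep_def by simp
  ultimately show "1 - x\<^sup>2 = gram_form H ?m ?U ?U x - gram_form H ?m ?V ?V x * poly (fpoly a b) x"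
    by (simp add: LIMSEQ_const_iff)
  have "gram_form (G k) ?m ?U ?V x = 0" for k using reps[of k] unfolding gram_rep_def by blast
  then show "gram_form H ?m ?U ?V x = 0" using gf[of ?U ?V] by (simp add: LIMSEQ_const_iff)
qed

lemma convergent_subseq_finite:
  fixes f :: "'i \<Rightarrow> nat \<Rightarrow> real"
  assumes "finite I" "\<forall>i\<in>I. bounded (range (f i))"
  shows "\<exists>r l. strict_mono r \<and> (\<forall>i\<in>I. (\<lambda>k. f i (r k)) \<longlonglongrightarrow> l i)"
  using assms
proof (induction I rule: finite_induct)
  case empty
  show ?case by (rule exI[of _ id]) (auto simp: strict_mono_def)
next
  case (insert i I)
  then obtain r l where r: "strict_mono r" "\<forall>i\<in>I. (\<lambda>k. f i (r k)) \<longlonglongrightarrow> l i" by auto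
  have "bounded (range (\<lambda>k. f i (r k)))"
    by (rule bounded_subset[of "range (f i)"]) (use insert.prems in auto)
  then obtain li r2 where r2: "strict_mono r2" "((\<lambda>k. f i (r k)) \<circ> r2) \<longlonglongrightarrow> li"
    using bounded_imp_convergent_subsequence by blast
  have "(\<lambda>k. f j ((r \<circ> r2) k)) \<longlonglongrightarrow> (l(i := li)) j" if "j \<in> insert i I" for j
  proof (cases "j = i")
    case False
    then have "((\<lambda>k. f j (r k)) \<circ> r2) \<longlonglongrightarrow> l j"
      using that r(2) r2(1) by (intro LIMSEQ_subseq_LIMSEQ) auto
    then show ?thesis using False by (simp add: o_def)
  qed (use r2(2) in \<open>simp add: o_def\<close>)
  then show ?case using strict_mono_o[OF r(1) r2(1)] by blast
qed

lemma gram_bounded_near: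
  fixes q :: "nat \<Rightarrow> real \<times> real"
  assumes lim: "q \<longlonglongrightarrow> (a, b)"
    and nodes: "\<And>j. \<bar>xs j\<bar> < 1 \<and> poly (hpoly a b) (xs j) > 0"
  shows "\<exists>k0 K. \<forall>k\<ge>k0. \<forall>gs s t. sos_rep (fst (q k)) (snd (q k)) n gs \<longrightarrow>
      s < gram_dim n \<longrightarrow> t < gram_dim n \<longrightarrow> \<bar>gram xs n gs s t\<bar> \<le> K"
proof -
  let ?h = "\<lambda>k. poly (hpoly (fst (q k)) (snd (q k)))"
  have "eventually (\<lambda>k. \<forall>j\<in>{..n}. ?h k (xs j) > poly (hpoly a b) (xs j) / 2) sequentially"
    using nodes by (intro eventually_ball_finite ballI order_tendstoD(1)[OF tendsto_poly_hpoly[OF lim]])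
      auto
  then obtain k0 where k0: "\<And>k j. k \<ge> k0 \<Longrightarrow> j \<le> n \<Longrightarrow> ?h k (xs j) > poly (hpoly a b) (xs j) / 2"
    unfolding eventually_sequentially by auto
  show ?thesis
  proof (intro exI[of _ k0] exI[of _ "\<Sum>j\<le>n. 1 + 2 / poly (hpoly a b) (xs j)"] allI impI)
    fix k gs s t assume k: "k \<ge> k0" and rep: "sos_rep (fst (q k)) (snd (q k)) n gs"
      and st: "s < gram_dim n" "t < gram_dim n"
    have pos: "?h k (xs j) > 0" if "j \<le> n" for j
      using k0[OF k that] nodes[of j] by linarith
    have "\<bar>xs j\<bar> < 1 \<and> ?h k (xs j) > 0" if "j \<le> n" for j
      using nodes[of j] pos[OF that] by simp
    then have "\<bar>gram xs n gs s t\<bar> \<le> (\<Sum>j\<le>n. 1 + 1 / ?h k (xs j))"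
      by (rule gram_entry_bound[OF rep _ st])
    also have "\<dots> \<le> (\<Sum>j\<le>n. 1 + 2 / poly (hpoly a b) (xs j))"
    proof (rule sum_mono)
      fix j assume "j \<in> {..n}"
      then have "poly (hpoly a b) (xs j) / 2 < ?h k (xs j)" using k0[OF k] by simp
      then have "1 / ?h k (xs j) \<le> 1 / (poly (hpoly a b) (xs j) / 2)"
        using nodes[of j] by (intro divide_left_mono) (auto intro: mult_pos_pos)
      then show "1 + 1 / ?h k (xs j) \<le> 1 + 2 / poly (hpoly a b) (xs j)" by simp
    qed
    finally show "\<bar>gram xs n gs s t\<bar> \<le> (\<Sum>j\<le>n. 1 + 2 / poly (hpoly a b) (xs j))" .
  qed
qed

lemma sos_bounded_limit:
  fixes q :: "nat \<Rightarrow> real \<times> real"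
  assumes lim: "q \<longlonglongrightarrow> (a, b)" and P: "(a, b) \<in> Pset"
    and reps: "\<And>k. sos_bounded (fst (q k)) (snd (q k)) one_minus_sq n"
  shows "sos_bounded a b one_minus_sq n"
proof -
  obtain u where u: "-1 \<le> u" "u < 1" "\<And>x. u < x \<Longrightarrow> x < 1 \<Longrightarrow> poly (hpoly a b) x > 0"
    by (fact Pset_positive_interval[OF P])
  obtain xs :: "nat \<Rightarrow> real" where inj: "inj xs" and xs: "\<And>j. u < xs j \<and> xs j < 1"
    by (fact nodes_in_interval[OF u(2)])
  have nodes: "\<bar>xs j\<bar> < 1 \<and> poly (hpoly a b) (xs j) > 0" for j using xs[of j] u by auto
  obtain k0 K where K: "\<forall>k\<ge>k0. \<forall>gs s t. sos_rep (fst (q k)) (snd (q k)) n gs \<longrightarrow>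
      s < gram_dim n \<longrightarrow> t < gram_dim n \<longrightarrow> \<bar>gram xs n gs s t\<bar> \<le> K"
    using gram_bounded_near[where xs=xs and n=n, OF lim nodes] by blast
  define gs where "gs k = (SOME gs. sos_rep (fst (q (k + k0))) (snd (q (k + k0))) n gs)" for k
  have rep: "sos_rep (fst (q (k + k0))) (snd (q (k + k0))) n (gs k)" for k
    unfolding gs_def using reps sos_bounded_iff_rep by (metis someI_ex)
  define G where "G k = gram xs n (gs k)" for k
  define I where "I = {..<gram_dim n} \<times> {..<gram_dim n}"
  have "\<bar>G k s t\<bar> \<le> K" if "s < gram_dim n" "t < gram_dim n" for k s t
    unfolding G_def using K[rule_format, OF le_add2 rep that] .
  then have "bounded (range (\<lambda>k. G k (fst i) (snd i)))" if "i \<in> I" for i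
    using that by (intro boundedI[where B=K]) (auto simp: I_def)
  then have "\<exists>r H. strict_mono r \<and> (\<forall>i\<in>I. (\<lambda>k. G (r k) (fst i) (snd i)) \<longlonglongrightarrow> H i)"
    by (intro convergent_subseq_finite) (auto simp: I_def)
  then obtain r H where r: "strict_mono r" and conv: "\<forall>i\<in>I. (\<lambda>k. G (r k) (fst i) (snd i)) \<longlonglongrightarrow> H i"
    by blast
  have "strict_mono (\<lambda>k. r k + k0)" using r by (simp add: strict_mono_def)
  then have "(\<lambda>k. q (r k + k0)) \<longlonglongrightarrow> (a, b)"
    using LIMSEQ_subseq_LIMSEQ[OF lim] by (simp add: o_def)
  moreover have "gram_rep xs n (fst (q (r k + k0))) (snd (q (r k + k0))) (G (r k))" for k
    unfolding G_def by (rule gram_rep_of_sos_rep[OF inj rep])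
  moreover have "(\<lambda>k. G (r k) s t) \<longlonglongrightarrow> H (s, t)" if "s < gram_dim n" "t < gram_dim n" for s t
    using conv that by (auto simp: I_def)
  ultimately have "gram_rep xs n a b (\<lambda>s t. H (s, t))" by (rule gram_rep_limit)
  then show ?thesis using sos_rep_of_gram_rep sos_bounded_iff_rep by blast
qed


theorem corollary4p6:
  shows "(\<forall>n::nat. closedin (top_of_set Pset) {p \<in> Pset. Nfun p \<le> enat n})
         \<and> (\<forall>(s :: nat \<Rightarrow> real \<times> real) p. (\<forall>\<nu>. s \<nu> \<in> Pset) \<longrightarrow> s \<longlonglongrightarrow> p \<longrightarrow>
              p \<in> P'set - {(0, -1)} \<longrightarrow>
              (\<forall>M::nat. eventually (\<lambda>\<nu>. enat M < Nfun (s \<nu>)) sequentially))"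
proof (intro conjI allI impI)
  fix n :: nat
  show "closedin (top_of_set Pset) {p \<in> Pset. Nfun p \<le> enat n}"
    unfolding closedin_limpt
  proof (intro conjI allI impI)
    fix p assume p: "p islimpt {p \<in> Pset. Nfun p \<le> enat n} \<and> p \<in> Pset"
    then obtain q where "\<forall>k. q k \<in> {p \<in> Pset. Nfun p \<le> enat n} - {p}" "q \<longlonglongrightarrow> p"
      using islimpt_sequential by blast
    then show "p \<in> {p \<in> Pset. Nfun p \<le> enat n}"
      using sos_bounded_limit[of q "fst p" "snd p" n] p by (auto simp: Nfun_le_iff)
  qed auto
next
  fix s :: "nat \<Rightarrow> real \<times> real" and p and M :: nat
  assume lim: "s \<longlonglongrightarrow> p" and "p \<in> P'set - {(0, -1)}"
  then obtain u v x0 where "-1 \<le> u" "u < v" "v \<le> 1"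
    "\<And>x. u < x \<Longrightarrow> x < v \<Longrightarrow> poly (hpoly (fst p) (snd p)) x > 0"
    "\<bar>x0\<bar> \<ge> 1" "poly (hpoly (fst p) (snd p)) x0 = 0"
    using P'set_root_and_positive_interval[of "fst p" "snd p"] by auto
  then have "eventually (\<lambda>k. \<not> sos_bounded (fst (s k)) (snd (s k)) one_minus_sq M) sequentially"
    using lim by (intro no_rep_near_root) auto
  then show "eventually (\<lambda>\<nu>. enat M < Nfun (s \<nu>)) sequentially"
    by (rule eventually_mono) (simp add: Nfun_le_iff[symmetric] not_le)
qed

end
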